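(* For every positive integer $n$, there is a simple coalition game $\mathcal G$ over the $n\times n$ grid graph $R_n$ with $\dfrac{\rho^f(\mathcal G)}{\rho(\mathcal G)}\ge \tfrac12\tau(R_n)$.
   Context: $R_n$ is the grid graph on $\{1,\dots,n\}^2$ with $(i,j)\sim(i',j')$ iff $|i-i'|+|j-j'|=1$. Coalition game over $G=(V,E)$: a valuation $v:2^V\to\mathbb Z_{\ge0}$ with $v(\emptyset)=0$, $v(S)=0$ whenever $G[S]$ is disconnected, $v$ not identically zero; simple if values lie in $\{0,1\}$. $\rho^f(\mathcal G)=\max\{\sum_S v(S)y_S: y\ge0,\ \sum_{S\ni i}y_S\le1\ \forall i\}$, and $\rho(\mathcal G)$ the same maximum over $0/1$ vectors $y$. Thicket number $\tau(G)$: maximum, over collections $\mathcal H$ of nonempty, connected-inducing, pairwise intersecting vertex sets, of the minimum size of a set meeting every member of $\mathcal H$. *)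

theory Defs
  imports Complex_Main
begin

definition induced_connected :: "('a \<Rightarrow> 'a \<Rightarrow> bool) \<Rightarrow> 'a set \<Rightarrow> bool" where
  "induced_connected E S \<longleftrightarrow> S \<noteq> {} \<and>
     (\<forall>x\<in>S. \<forall>y\<in>S. (x, y) \<in> ({(a, b). a \<in> S \<and> b \<in> S \<and> E a b})\<^sup>*)"

definition coalition_game :: "'a set \<Rightarrow> ('a \<Rightarrow> 'a \<Rightarrow> bool) \<Rightarrow> ('a set \<Rightarrow> nat) \<Rightarrow> bool" where
  "coalition_game V E v \<longleftrightarrow> v {} = 0
     \<and> (\<forall>S\<subseteq>V. \<not> induced_connected E S \<longrightarrow> v S = 0)
     \<and> (\<exists>S\<subseteq>V. v S \<noteq> 0)"

definition simple_coalition_game :: "'a set \<Rightarrow> ('a \<Rightarrow> 'a \<Rightarrow> bool) \<Rightarrow> ('a set \<Rightarrow> nat) \<Rightarrow> bool" where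
  "simple_coalition_game V E v \<longleftrightarrow> coalition_game V E v \<and> (\<forall>S\<subseteq>V. v S \<in> {0, 1})"

definition packing_feasible :: "'a set \<Rightarrow> ('a set \<Rightarrow> real) \<Rightarrow> bool" where
  "packing_feasible V y \<longleftrightarrow> (\<forall>S\<subseteq>V. y S \<ge> 0)
     \<and> (\<forall>i\<in>V. (\<Sum>S\<in>{S. S \<subseteq> V \<and> i \<in> S}. y S) \<le> 1)"

definition packing_value :: "'a set \<Rightarrow> ('a set \<Rightarrow> nat) \<Rightarrow> ('a set \<Rightarrow> real) \<Rightarrow> real" where
  "packing_value V v y = (\<Sum>S\<in>Pow V. real (v S) * y S)"

text \<open>Fractional optimum rho^f (a maximum; written as supremum of the bounded LP values).\<close>
definition rho_f :: "'a set \<Rightarrow> ('a set \<Rightarrow> nat) \<Rightarrow> real" where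
  "rho_f V v = Sup {packing_value V v y | y. packing_feasible V y}"

definition rho :: "'a set \<Rightarrow> ('a set \<Rightarrow> nat) \<Rightarrow> real" where
  "rho V v = Max {packing_value V v y | y. packing_feasible V y \<and> (\<forall>S\<subseteq>V. y S \<in> {0, 1})}"

definition thicket :: "'a set \<Rightarrow> ('a \<Rightarrow> 'a \<Rightarrow> bool) \<Rightarrow> 'a set set \<Rightarrow> bool" where
  "thicket V E H \<longleftrightarrow> (\<forall>X\<in>H. X \<subseteq> V \<and> X \<noteq> {} \<and> induced_connected E X)
     \<and> (\<forall>X\<in>H. \<forall>Y\<in>H. X \<inter> Y \<noteq> {})"

definition hitting_number :: "'a set \<Rightarrow> 'a set set \<Rightarrow> nat" where
  "hitting_number V H = Min {card T | T. T \<subseteq> V \<and> (\<forall>X\<in>H. T \<inter> X \<noteq> {})}"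

definition thicket_number :: "'a set \<Rightarrow> ('a \<Rightarrow> 'a \<Rightarrow> bool) \<Rightarrow> nat" where
  "thicket_number V E = Max {hitting_number V H | H. thicket V E H}"

definition grid_V :: "nat \<Rightarrow> (nat \<times> nat) set" where
  "grid_V n = {1..n} \<times> {1..n}"

definition grid_adj :: "nat \<times> nat \<Rightarrow> nat \<times> nat \<Rightarrow> bool" where
  "grid_adj p q \<longleftrightarrow> \<bar>int (fst p) - int (fst q)\<bar> + \<bar>int (snd p) - int (snd q)\<bar> = 1"

end

theory Submission
  imports Defs
begin

text \<open>
  A thicket of the grid is always hit by one full row: the row projections of its members are
  pairwise intersecting integer intervals (connectedness), so they share a point, and hence
  \<open>\<tau>(R\<^sub>n) \<le> n\<close>. The game takes value 1 exactly on the \<open>n\<^sup>2\<close> crosses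
  (row \<open>a\<close> together with column \<open>b\<close>). Two crosses always meet, so an integral packing
  uses at most one of them and \<open>\<rho> = 1\<close>; every vertex lies on \<open>2n - 1\<close> crosses, so the
  uniform weight \<open>1 / (2n - 1)\<close> is a fractional packing of value
  \<open>n\<^sup>2 / (2n - 1) \<ge> n / 2\<close>.
\<close>

section \<open>Connectivity of induced subgraphs\<close>

lemma rtrancl_consecutive:
  assumes "sym r" and step: "\<And>k. min i j \<le> k \<Longrightarrow> k < max i j \<Longrightarrow> (f k, f (Suc k)) \<in> r"
  shows "(f i, f j) \<in> r\<^sup>*"
proof -
  have "(f (min i j), f (max i j)) \<in> r\<^sup>*"
    by (rule dec_induct[of "min i j" "max i j"]) (auto intro: rtrancl_into_rtrancl step)
  then show ?thesis
    using sym_rtrancl[OF \<open>sym r\<close>] by (cases "i \<le> j") (auto simp: min_def max_def dest: symD)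
qed

definition induced_edges :: "('a \<Rightarrow> 'a \<Rightarrow> bool) \<Rightarrow> 'a set \<Rightarrow> ('a \<times> 'a) set" where
  "induced_edges E S = {(a, b). a \<in> S \<and> b \<in> S \<and> E a b}"

lemma induced_connected_iff:
  "induced_connected E S \<longleftrightarrow> S \<noteq> {} \<and> (\<forall>x\<in>S. \<forall>y\<in>S. (x, y) \<in> (induced_edges E S)\<^sup>*)"
  by (simp add: induced_connected_def induced_edges_def)

lemma induced_connected_invariant:
  assumes "induced_connected E S"
    and "\<And>x y. x \<in> S \<Longrightarrow> y \<in> S \<Longrightarrow> E x y \<Longrightarrow> P x = P y"
    and "x \<in> S" "y \<in> S"
  shows "P x = P y"
proof -
  have "(x, y) \<in> (induced_edges E S)\<^sup>*"
    using assms(1,3,4) by (simp add: induced_connected_iff)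
  then show ?thesis
    by (induction rule: rtrancl_induct) (auto simp: induced_edges_def dest: assms(2))
qed

lemma induced_connected_intermediate_value:
  fixes f :: "'a \<Rightarrow> nat"
  assumes conn: "induced_connected E S"
    and step: "\<And>x y. E x y \<Longrightarrow> \<bar>int (f x) - int (f y)\<bar> \<le> 1"
    and "x \<in> S" "y \<in> S" "f x \<le> r" "r \<le> f y"
  shows "\<exists>z\<in>S. f z = r"
proof (rule ccontr)
  assume avoid: "\<not> (\<exists>z\<in>S. f z = r)"
  have "(f x < r) = (f y < r)"
  proof (rule induced_connected_invariant[OF conn _ \<open>x \<in> S\<close> \<open>y \<in> S\<close>])
    fix u w assume "u \<in> S" "w \<in> S" "E u w"
    moreover from this have "f u \<noteq> r" "f w \<noteq> r" using avoid by auto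
    ultimately show "(f u < r) = (f w < r)" using step[of u w] by linarith
  qed
  with assms(3-6) avoid show False by (metis le_neq_implies_less not_less)
qed

lemma induced_connected_hub:
  assumes sym: "\<And>x y. E x y \<Longrightarrow> E y x"
    and "c \<in> S" and to_hub: "\<And>x. x \<in> S \<Longrightarrow> (x, c) \<in> (induced_edges E S)\<^sup>*"
  shows "induced_connected E S"
proof -
  have "sym ((induced_edges E S)\<^sup>*)"
    using sym by (intro sym_rtrancl) (auto simp: sym_def induced_edges_def)
  then have "(c, y) \<in> (induced_edges E S)\<^sup>*" if "y \<in> S" for y
    using to_hub[OF that] by (meson symD)
  with to_hub \<open>c \<in> S\<close> show ?thesis
    unfolding induced_connected_iff by (meson rtrancl_trans empty_iff)
qed

section \<open>Thickets of the grid\<close>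

lemma hitting_number_le:
  assumes "finite V" "T \<subseteq> V" "\<forall>X\<in>H. T \<inter> X \<noteq> {}"
  shows "hitting_number V H \<le> card T"
proof -
  have "{card T | T. T \<subseteq> V \<and> (\<forall>X\<in>H. T \<inter> X \<noteq> {})} \<subseteq> card ` Pow V" by auto
  then have "finite {card T | T. T \<subseteq> V \<and> (\<forall>X\<in>H. T \<inter> X \<noteq> {})}"
    using \<open>finite V\<close> finite_subset by blast
  with assms(2,3) show ?thesis unfolding hitting_number_def by (intro Min_le) auto
qed

lemma thicket_number_le:
  assumes "\<And>H. thicket V E H \<Longrightarrow> hitting_number V H \<le> k"
  shows "thicket_number V E \<le> k"
proof -
  let ?N = "{hitting_number V H | H. thicket V E H}"
  have "?N \<subseteq> {..k}" using assms by auto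
  moreover have "thicket V E {}" by (simp add: thicket_def)
  then have "?N \<noteq> {}" by blast
  ultimately show ?thesis
    unfolding thicket_number_def by (meson Max_le_iff atMost_iff finite_atMost finite_subset subsetD)
qed

lemma grid_adj_sym: "grid_adj p q \<Longrightarrow> grid_adj q p"
  by (simp add: grid_adj_def abs_minus_commute)

lemma grid_adj_fst_dist: "grid_adj p q \<Longrightarrow> \<bar>int (fst p) - int (fst q)\<bar> \<le> 1"
  unfolding grid_adj_def by linarith

lemma finite_grid_V: "finite (grid_V n)"
  by (simp add: grid_V_def)

lemma grid_thicket_common_row:
  assumes thicket: "thicket (grid_V n) grid_adj H" and "n \<ge> 1"
  shows "\<exists>r\<in>{1..n}. \<forall>X\<in>H. \<exists>x\<in>X. fst x = r"
proof (cases "H = {}")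
  case True
  with \<open>n \<ge> 1\<close> show ?thesis by auto
next
  case False
  have member: "X \<subseteq> grid_V n" "X \<noteq> {}" "induced_connected grid_adj X" if "X \<in> H" for X
    using thicket that by (auto simp: thicket_def)
  have finite_member: "finite X" if "X \<in> H" for X
    using member(1)[OF that] finite_grid_V finite_subset by blast
  have "finite H"
    using member(1) finite_grid_V by (meson PowI finite_Pow_iff finite_subset subsetI)
  define r where "r = Max ((\<lambda>X. Min (fst ` X)) ` H)"
  have "r \<in> (\<lambda>X. Min (fst ` X)) ` H"
    unfolding r_def using \<open>finite H\<close> False by (intro Max_in) auto
  then obtain X0 where X0: "X0 \<in> H" "r = Min (fst ` X0)" by blast
  have "r \<in> fst ` X0"
    using X0 finite_member member(2)[OF X0(1)] by (auto intro: Min_in)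
  then have "r \<in> {1..n}"
    using member(1)[OF X0(1)] by (auto simp: grid_V_def)
  moreover have "\<exists>x\<in>Y. fst x = r" if Y: "Y \<in> H" for Y
  proof -
    have "Min (fst ` Y) \<in> fst ` Y"
      using finite_member[OF Y] member(2)[OF Y] by (intro Min_in) auto
    then obtain y1 where y1: "y1 \<in> Y" "fst y1 = Min (fst ` Y)" by force
    have "fst y1 \<le> r"
      unfolding r_def y1(2) using \<open>finite H\<close> Y by (intro Max_ge) auto
    obtain y2 where y2: "y2 \<in> Y" "y2 \<in> X0"
      using thicket X0(1) Y unfolding thicket_def by blast
    have "r \<le> fst y2"
      unfolding X0(2) using finite_member[OF X0(1)] y2(2) by (intro Min_le) auto
    show ?thesis
      using induced_connected_intermediate_value[where f = fst, OF member(3)[OF Y] grid_adj_fst_dist]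
        y1(1) y2(1) \<open>fst y1 \<le> r\<close> \<open>r \<le> fst y2\<close> by blast
  qed
  ultimately show ?thesis by blast
qed

lemma grid_thicket_number_le:
  assumes "n \<ge> 1"
  shows "thicket_number (grid_V n) grid_adj \<le> n"
proof (rule thicket_number_le)
  fix H assume thicket: "thicket (grid_V n) grid_adj H"
  then obtain r where r: "r \<in> {1..n}" "\<forall>X\<in>H. \<exists>x\<in>X. fst x = r"
    using grid_thicket_common_row assms by blast
  have "\<forall>X\<in>H. ({r} \<times> {1..n}) \<inter> X \<noteq> {}"
    using r(2) thicket by (fastforce simp: thicket_def grid_V_def)
  then have "hitting_number (grid_V n) H \<le> card ({r} \<times> {1..n})"
    using r(1) by (intro hitting_number_le finite_grid_V) (auto simp: grid_V_def)
  then show "hitting_number (grid_V n) H \<le> n" by simp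
qed

section \<open>Integral and fractional packings\<close>

lemma packing_feasible_le_1:
  assumes "packing_feasible V y" "finite V" "S \<subseteq> V" "i \<in> S"
  shows "y S \<le> 1"
proof -
  have "y S \<le> (\<Sum>T\<in>{T. T \<subseteq> V \<and> i \<in> T}. y T)"
    using assms by (intro member_le_sum) (auto simp: packing_feasible_def)
  also have "\<dots> \<le> 1"
    using assms by (auto simp: packing_feasible_def)
  finally show ?thesis .
qed

lemma packing_feasible_01_intersecting_eq:
  assumes "packing_feasible V y" "finite V" "S \<subseteq> V" "T \<subseteq> V"
    and "y S = 1" "y T = 1" "S \<inter> T \<noteq> {}"
  shows "S = T"
proof (rule ccontr)
  assume "S \<noteq> T"
  obtain i where i: "i \<in> S" "i \<in> T" using \<open>S \<inter> T \<noteq> {}\<close> by blast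
  let ?A = "{U. U \<subseteq> V \<and> i \<in> U}"
  have "2 = (\<Sum>U\<in>{S, T}. y U)" using \<open>S \<noteq> T\<close> assms(5,6) by simp
  also have "\<dots> \<le> (\<Sum>U\<in>?A. y U)"
    using assms i by (intro sum_mono2) (auto simp: packing_feasible_def)
  also have "\<dots> \<le> 1"
    using assms i by (auto simp: packing_feasible_def)
  finally show False by simp
qed

text \<open>The packing constraints do not bound \<open>y {}\<close>; without \<open>v {} = 0\<close> the set
  whose supremum defines \<open>rho_f\<close> would be unbounded.\<close>

lemma packing_value_le_rho_f:
  assumes "finite V" "v {} = 0" "packing_feasible V y"
  shows "packing_value V v y \<le> rho_f V v"
  unfolding rho_f_def
proof (rule cSup_upper)
  show "packing_value V v y \<in> {packing_value V v y | y. packing_feasible V y}"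
    using assms(3) by blast
  have "packing_value V v z \<le> (\<Sum>S\<in>Pow V. real (v S))" if "packing_feasible V z" for z
    unfolding packing_value_def
  proof (rule sum_mono)
    fix S assume "S \<in> Pow V"
    show "real (v S) * z S \<le> real (v S)"
    proof (cases "S = {}")
      case False
      then obtain i where "i \<in> S" by blast
      then have "z S \<le> 1"
        using packing_feasible_le_1[OF that \<open>finite V\<close>] \<open>S \<in> Pow V\<close> by blast
      then show ?thesis by (simp add: mult_left_le)
    qed (simp add: \<open>v {} = 0\<close>)
  qed
  then show "bdd_above {packing_value V v y | y. packing_feasible V y}"
    by (intro bdd_aboveI) blast
qed

lemma rho_f_ge_uniform:
  fixes d :: nat
  assumes "finite V" "v {} = 0" "F \<subseteq> Pow V" "d > 0"
    and degree: "\<And>i. i \<in> V \<Longrightarrow> card {S \<in> F. i \<in> S} \<le> d"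
  shows "(\<Sum>S\<in>F. real (v S)) / d \<le> rho_f V v"
proof -
  define y where "y S = (if S \<in> F then 1 / real d else 0)" for S
  have "packing_feasible V y"
    unfolding packing_feasible_def
  proof (intro conjI allI ballI impI)
    fix i assume "i \<in> V"
    have "(\<Sum>S\<in>{S. S \<subseteq> V \<and> i \<in> S}. y S) = (\<Sum>S\<in>{S \<in> F. i \<in> S}. 1 / real d)"
      unfolding y_def using assms(1,3) by (intro sum.mono_neutral_cong_right) auto
    also have "\<dots> = real (card {S \<in> F. i \<in> S}) / real d" by simp
    also have "\<dots> \<le> 1" using degree[OF \<open>i \<in> V\<close>] \<open>d > 0\<close> by simp
    finally show "(\<Sum>S\<in>{S. S \<subseteq> V \<and> i \<in> S}. y S) \<le> 1" .
  qed (simp add: y_def)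
  moreover have "packing_value V v y = (\<Sum>S\<in>F. real (v S)) / d"
    unfolding packing_value_def y_def sum_divide_distrib
    using assms(1,3) by (intro sum.mono_neutral_cong_right) auto
  ultimately show ?thesis
    using packing_value_le_rho_f assms(1,2) by metis
qed

lemma packing_value_in_01_if_intersecting:
  assumes "finite V" and v01: "\<And>S. S \<subseteq> V \<Longrightarrow> v S \<in> {0, 1}"
    and intersecting: "\<And>S T. S \<subseteq> V \<Longrightarrow> T \<subseteq> V \<Longrightarrow> v S = 1 \<Longrightarrow> v T = 1 \<Longrightarrow> S \<inter> T \<noteq> {}"
    and y: "packing_feasible V y" "\<forall>S\<subseteq>V. y S \<in> {0, 1}"
  shows "packing_value V v y \<in> {0, 1}"
proof -
  define K where "K = {S \<in> Pow V. v S = 1 \<and> y S = 1}"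
  have "finite K" using \<open>finite V\<close> by (simp add: K_def)
  have "real (v S) * y S = (if S \<in> K then 1 else 0)" if "S \<in> Pow V" for S
    using that v01[of S] y(2) by (auto simp: K_def)
  then have "packing_value V v y = (\<Sum>S\<in>Pow V. if S \<in> K then 1 else 0)"
    unfolding packing_value_def by (intro sum.cong) auto
  also have "\<dots> = real (card K)"
    using \<open>finite V\<close> by (simp add: sum.If_cases K_def Int_def conj_commute)
  finally have "packing_value V v y = real (card K)" .
  moreover have "\<forall>S\<in>K. \<forall>T\<in>K. S = T"
  proof (intro ballI)
    fix S T assume "S \<in> K" "T \<in> K"
    then have "S \<subseteq> V" "T \<subseteq> V" "v S = 1" "v T = 1" "y S = 1" "y T = 1"
      by (simp_all add: K_def)
    then show "S = T"
      using packing_feasible_01_intersecting_eq[OF y(1) \<open>finite V\<close>] intersecting by metis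
  qed
  then have "card K \<le> 1"
    using card_le_Suc0_iff_eq[OF \<open>finite K\<close>] by (simp only: One_nat_def)
  ultimately show ?thesis by (auto simp: le_Suc_eq)
qed

lemma packing_singleton:
  assumes "finite V" "S0 \<subseteq> V"
  shows "packing_feasible V (\<lambda>S. if S = S0 then 1 else 0)"
    and "packing_value V v (\<lambda>S. if S = S0 then 1 else 0) = real (v S0)"
proof -
  show "packing_feasible V (\<lambda>S. if S = S0 then 1 else 0)"
    unfolding packing_feasible_def
  proof (intro conjI allI ballI impI)
    fix i assume "i \<in> V"
    have "finite {S. S \<subseteq> V \<and> i \<in> S}" using \<open>finite V\<close> by simp
    then show "(\<Sum>S\<in>{S. S \<subseteq> V \<and> i \<in> S}. if S = S0 then 1 else 0 :: real) \<le> 1"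
      by (simp add: sum.delta)
  qed simp
  have "packing_value V v (\<lambda>S. if S = S0 then 1 else 0)
      = (\<Sum>S\<in>Pow V. if S = S0 then real (v S0) else 0)"
    unfolding packing_value_def by (intro sum.cong) auto
  then show "packing_value V v (\<lambda>S. if S = S0 then 1 else 0) = real (v S0)"
    using assms by (simp add: sum.delta)
qed

lemma rho_eq_1_if_intersecting:
  assumes "finite V" and game: "simple_coalition_game V E v"
    and intersecting: "\<And>S T. S \<subseteq> V \<Longrightarrow> T \<subseteq> V \<Longrightarrow> v S = 1 \<Longrightarrow> v T = 1 \<Longrightarrow> S \<inter> T \<noteq> {}"
  shows "rho V v = 1"
proof -
  let ?values = "{packing_value V v y | y. packing_feasible V y \<and> (\<forall>S\<subseteq>V. y S \<in> {0, 1})}"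
  have v01: "v S \<in> {0, 1}" if "S \<subseteq> V" for S
    using game that by (simp add: simple_coalition_game_def)
  then have values01: "?values \<subseteq> {0, 1}"
    using packing_value_in_01_if_intersecting[OF \<open>finite V\<close> _ intersecting] by blast
  obtain S0 where "S0 \<subseteq> V" "v S0 \<noteq> 0"
    using game unfolding simple_coalition_game_def coalition_game_def by blast
  moreover from v01[OF this(1)] this(2) have "v S0 = 1" by simp
  ultimately have S0: "S0 \<subseteq> V" "v S0 = 1" by blast+
  have "1 \<in> ?values"
    using packing_singleton[OF \<open>finite V\<close> S0(1)] S0(2)
    by (intro CollectI exI[of _ "\<lambda>S. if S = S0 then 1 else 0"]) simp
  moreover have "finite ?values"
    by (rule finite_subset[OF values01]) simp
  ultimately show ?thesis
    using values01 unfolding rho_def by (intro Max_eqI) auto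
qed

section \<open>The cross game\<close>

definition cross :: "nat \<Rightarrow> nat \<Rightarrow> nat \<Rightarrow> (nat \<times> nat) set" where
  "cross n a b = {p \<in> grid_V n. fst p = a \<or> snd p = b}"

definition crosses :: "nat \<Rightarrow> (nat \<times> nat) set set" where
  "crosses n = (\<lambda>(a, b). cross n a b) ` ({1..n} \<times> {1..n})"

definition cross_game :: "nat \<Rightarrow> (nat \<times> nat) set \<Rightarrow> nat" where
  "cross_game n S = (if S \<in> crosses n then 1 else 0)"

lemma cross_connected:
  assumes "a \<in> {1..n}" "b \<in> {1..n}"
  shows "induced_connected grid_adj (cross n a b)"
proof (rule induced_connected_hub[OF grid_adj_sym])
  show "(a, b) \<in> cross n a b" using assms by (simp add: cross_def grid_V_def)
  have sym: "sym (induced_edges grid_adj (cross n a b))"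
    by (auto simp: sym_def induced_edges_def intro: grid_adj_sym)
  fix p assume "p \<in> cross n a b"
  then obtain i j where p: "p = (i, j)" "i \<in> {1..n}" "j \<in> {1..n}" "i = a \<or> j = b"
    by (auto simp: cross_def grid_V_def)
  from p(4) show "(p, (a, b)) \<in> (induced_edges grid_adj (cross n a b))\<^sup>*"
  proof
    assume "i = a"
    have "((\<lambda>k. (a, k)) j, (\<lambda>k. (a, k)) b) \<in> (induced_edges grid_adj (cross n a b))\<^sup>*"
      by (rule rtrancl_consecutive[OF sym])
        (use assms p in \<open>auto simp: induced_edges_def cross_def grid_V_def grid_adj_def\<close>)
    with p(1) \<open>i = a\<close> show ?thesis by simp
  next
    assume "j = b"
    have "((\<lambda>k. (k, b)) i, (\<lambda>k. (k, b)) a) \<in> (induced_edges grid_adj (cross n a b))\<^sup>*"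
      by (rule rtrancl_consecutive[OF sym])
        (use assms p in \<open>auto simp: induced_edges_def cross_def grid_V_def grid_adj_def\<close>)
    with p(1) \<open>j = b\<close> show ?thesis by simp
  qed
qed

lemma crosses_intersect:
  assumes "S \<in> crosses n" "T \<in> crosses n"
  shows "S \<inter> T \<noteq> {}"
proof -
  obtain a b a' b' where "S = cross n a b" "T = cross n a' b'" "a \<in> {1..n}" "b' \<in> {1..n}"
    using assms unfolding crosses_def by auto
  then have "(a, b') \<in> S \<inter> T" by (simp add: cross_def grid_V_def)
  then show ?thesis by blast
qed

lemma inj_on_cross: "inj_on (\<lambda>(a, b). cross n a b) ({1..n} \<times> {1..n})"
proof (rule inj_onI, clarify)
  fix a b a' b'
  assume ab: "a \<in> {1..n}" "b \<in> {1..n}" "a' \<in> {1..n}" "b' \<in> {1..n}"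
    and eq: "cross n a b = cross n a' b'"
  show "a = a' \<and> b = b'"
  proof (cases "n = 1")
    case False
    define k :: nat where "k = (if b' = 1 then 2 else 1)"
    have k: "k \<in> {1..n}" "k \<noteq> b'"
      using False ab(4) by (auto simp: k_def)
    have "(a, k) \<in> cross n a b" using ab k by (simp add: cross_def grid_V_def)
    then have "(a, k) \<in> cross n a' b'" using eq by simp
    then have "a = a'" using k(2) by (simp add: cross_def)
    define r :: nat where "r = (if a = 1 then 2 else 1)"
    have r: "r \<in> {1..n}" "r \<noteq> a"
      using False ab(1) by (auto simp: r_def)
    have "(r, b) \<in> cross n a b" using ab r by (simp add: cross_def grid_V_def)
    then have "(r, b) \<in> cross n a' b'" using eq by simp
    then have "b = b'" using r(2) \<open>a = a'\<close> by (simp add: cross_def)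
    with \<open>a = a'\<close> show ?thesis ..
  qed (use ab in auto)
qed

lemma card_crosses: "card (crosses n) = n * n"
  unfolding crosses_def card_image[OF inj_on_cross] card_cartesian_product by simp

lemma card_crosses_containing:
  assumes "n \<ge> 1" "(p, q) \<in> grid_V n"
  shows "card {S \<in> crosses n. (p, q) \<in> S} \<le> 2 * n - 1"
proof -
  define I where "I = {p} \<times> {1..n} \<union> ({1..n} - {p}) \<times> {q}"
  have "{S \<in> crosses n. (p, q) \<in> S} \<subseteq> (\<lambda>(a, b). cross n a b) ` I"
    by (auto simp: crosses_def cross_def I_def)
  then have "card {S \<in> crosses n. (p, q) \<in> S} \<le> card ((\<lambda>(a, b). cross n a b) ` I)"
    by (intro card_mono) (auto simp: I_def)
  also have "\<dots> \<le> card I"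
    by (rule card_image_le) (simp add: I_def)
  also have "\<dots> \<le> card ({p} \<times> {1..n}) + card (({1..n} - {p}) \<times> {q})"
    unfolding I_def by (rule card_Un_le)
  also have "\<dots> = 2 * n - 1"
    using assms by (simp add: grid_V_def)
  finally show ?thesis .
qed

lemma cross_game_eq_1_iff: "cross_game n S = 1 \<longleftrightarrow> S \<in> crosses n"
  by (simp add: cross_game_def)

lemma simple_coalition_game_cross_game:
  assumes "n \<ge> 1"
  shows "simple_coalition_game (grid_V n) grid_adj (cross_game n)"
  unfolding simple_coalition_game_def coalition_game_def
proof (intro conjI)
  show "cross_game n {} = 0"
    using crosses_intersect by (auto simp: cross_game_def)
  show "\<forall>S\<subseteq>grid_V n. \<not> induced_connected grid_adj S \<longrightarrow> cross_game n S = 0"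
    using cross_connected by (auto simp: cross_game_def crosses_def)
  have "cross n 1 1 \<in> crosses n" "cross n 1 1 \<subseteq> grid_V n"
    using assms by (force simp: crosses_def cross_def)+
  then show "\<exists>S\<subseteq>grid_V n. cross_game n S \<noteq> 0"
    by (auto simp: cross_game_def)
  show "\<forall>S\<subseteq>grid_V n. cross_game n S \<in> {0, 1}"
    by (simp add: cross_game_def)
qed

lemma rho_cross_game:
  assumes "n \<ge> 1"
  shows "rho (grid_V n) (cross_game n) = 1"
proof (rule rho_eq_1_if_intersecting[OF finite_grid_V simple_coalition_game_cross_game[OF assms]])
  fix S T assume "cross_game n S = 1" "cross_game n T = 1"
  then show "S \<inter> T \<noteq> {}"
    unfolding cross_game_eq_1_iff by (rule crosses_intersect)
qed

lemma rho_f_cross_game: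
  assumes "n \<ge> 1"
  shows "real n / 2 \<le> rho_f (grid_V n) (cross_game n)"
proof -
  have "real n / 2 \<le> real n * real n / real (2 * n - 1)"
    using assms by (simp add: of_nat_diff field_simps)
  also have "\<dots> = (\<Sum>S\<in>crosses n. real (cross_game n S)) / real (2 * n - 1)"
    using card_crosses by (simp add: cross_game_def)
  also have "\<dots> \<le> rho_f (grid_V n) (cross_game n)"
  proof (rule rho_f_ge_uniform[OF finite_grid_V])
    show "cross_game n {} = 0"
      using crosses_intersect by (auto simp: cross_game_def)
    show "crosses n \<subseteq> Pow (grid_V n)"
      by (auto simp: crosses_def cross_def)
  qed (use assms card_crosses_containing in auto)
  finally show ?thesis .
qed

theorem lemma5p2:
  fixes n :: nat
  assumes "n \<ge> 1"
  shows "\<exists>v. simple_coalition_game (grid_V n) grid_adj v \<and>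
           rho_f (grid_V n) v / rho (grid_V n) v \<ge> real (thicket_number (grid_V n) grid_adj) / 2"
proof (intro exI conjI)
  show "simple_coalition_game (grid_V n) grid_adj (cross_game n)"
    using simple_coalition_game_cross_game[OF assms] .
  have "real (thicket_number (grid_V n) grid_adj) / 2 \<le> real n / 2"
    using grid_thicket_number_le[OF assms] by simp
  also have "\<dots> \<le> rho_f (grid_V n) (cross_game n) / rho (grid_V n) (cross_game n)"
    using rho_f_cross_game[OF assms] rho_cross_game[OF assms] by simp
  finally show "real (thicket_number (grid_V n) grid_adj) / 2
      \<le> rho_f (grid_V n) (cross_game n) / rho (grid_V n) (cross_game n)" .
qed

end
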